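(* Let $(a_n)_{n\ge1}$ be the sequence defined by $a_1=1$ and $a_n = a_{n-1}\left(1-\frac{a_{n-1}}{n}\right)$ for $n\ge 2$. Then $\frac{1}{a_n}\sim \log n$, i.e. $\lim_{n\to\infty} \frac{1/a_n}{\log n}=1$.
   Context: $\log$ denotes the natural logarithm. The sequence $(a_n)$ is defined by the recurrence $a_1=1$, $a_n=a_{n-1}(1-a_{n-1}/n)$ for $n\ge2$. *)

theory Defs
  imports "HOL-Analysis.Analysis"
begin

text \<open>The sequence a_n for n >= 1; the value at index 0 is an unused dummy (set to 0).\<close>
fun a :: "nat \<Rightarrow> real" where
  "a 0 = 0"
| "a (Suc 0) = 1"
| "a (Suc (Suc n)) = a (Suc n) * (1 - a (Suc n) / real (Suc (Suc n)))"

end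

theory Submission
  imports Defs "HOL-Real_Asymp.Real_Asymp"
begin

text \<open>The recursion inverts to 1/a(n) = 1/a(n-1) + 1/(n - a(n-1)), and since
  0 < a(n-1) \<le> 1 the increment lies between 1/n and 1/(n-1). Summing gives
  H(n) \<le> 1/a(n) \<le> 1 + H(n-1) for the harmonic numbers H, so 1/a(n) stays within
  bounded distance of ln n.\<close>

lemma a_Suc_pos_le_one: "0 < a (Suc n) \<and> a (Suc n) \<le> 1"
proof (induction n)
  case (Suc n)
  define x where "x = a (Suc n)"
  define N where "N = real (Suc (Suc n))"
  have "0 < x" "x \<le> 1" "2 \<le> N" using Suc by (auto simp: x_def N_def)
  then have "0 < 1 - x / N" "1 - x / N \<le> 1" by (auto simp: field_simps)
  then have "0 < x * (1 - x / N)" "x * (1 - x / N) \<le> 1"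
    using \<open>0 < x\<close> \<open>x \<le> 1\<close> by (auto intro: mult_le_one)
  then show ?case by (simp add: x_def N_def)
qed simp

lemma inverse_a_Suc_Suc:
  "1 / a (Suc (Suc n)) = 1 / a (Suc n) + 1 / (real (Suc (Suc n)) - a (Suc n))"
proof -
  have "0 < a (Suc n)" "a (Suc n) < real (Suc (Suc n))"
    using a_Suc_pos_le_one[of n] by auto
  then show ?thesis by (simp add: field_simps)
qed

lemma harm_bounds_inverse_a:
  "harm (Suc n) \<le> 1 / a (Suc n) \<and> 1 / a (Suc n) \<le> 1 + harm n"
proof (induction n)
  case 0
  then show ?case by (simp add: harm_def)
next
  case (Suc n)
  define x where "x = a (Suc n)"
  define N where "N = real (Suc (Suc n))"
  have "0 < x" "x \<le> 1" "2 \<le> N"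
    using a_Suc_pos_le_one[of n] by (auto simp: x_def N_def)
  then have "1 / N \<le> 1 / (N - x)" "1 / (N - x) \<le> 1 / (N - 1)"
    by (auto intro: frac_le divide_left_mono)
  moreover have "harm (Suc (Suc n)) = harm (Suc n) + 1 / N"
    and "harm (Suc n) = harm n + 1 / (N - 1)"
    by (simp_all add: harm_Suc N_def divide_inverse)
  ultimately show ?case
    using Suc inverse_a_Suc_Suc[of n] by (simp add: x_def N_def)
qed

lemma harm_le_one_plus_ln: "harm n \<le> 1 + ln (real n)"
proof (cases "n = 0")
  case False
  then show ?thesis
    using euler_mascheroni_sequence_decreasing[of 1 n] by (simp add: harm_Suc harm_def)
qed (simp add: harm_def)

text \<open>Both bounds hold also at the dummy index \<open>n = 0\<close>, where \<open>ln 0 = 1 / a 0 = 0\<close>.\<close>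

lemma ln_le_inverse_a: "ln (real n) \<le> 1 / a n"
proof (cases n)
  case (Suc m)
  have "ln (real (Suc m)) \<le> harm m" using ln_le_harm[of m] by (simp add: add.commute)
  also have "\<dots> \<le> harm (Suc m)" by (rule harm_mono) simp
  also have "\<dots> \<le> 1 / a (Suc m)" using harm_bounds_inverse_a[of m] by simp
  finally show ?thesis using Suc by simp
qed simp

lemma inverse_a_le_ln: "1 / a n \<le> 2 + ln (real n)"
proof (cases n)
  case (Suc m)
  have "1 / a (Suc m) \<le> 1 + harm m" using harm_bounds_inverse_a[of m] by simp
  also have "\<dots> \<le> 2 + ln (real m)" using harm_le_one_plus_ln[of m] by simp
  also have "\<dots> \<le> 2 + ln (real (Suc m))" by (cases "m = 0") simp_all
  finally show ?thesis using Suc by simp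
qed simp

lemma tendsto_div_ln_one_if_ln_bounded:
  fixes f :: "nat \<Rightarrow> real"
  assumes "eventually (\<lambda>n. ln (real n) \<le> f n \<and> f n \<le> c + ln (real n)) sequentially"
  shows "(\<lambda>n. f n / ln (real n)) \<longlonglongrightarrow> 1"
proof (rule tendsto_sandwich[of "\<lambda>_. 1" _ _ "\<lambda>n. 1 + c / ln (real n)"])
  have "eventually (\<lambda>n. 0 < ln (real n)) sequentially" by real_asymp
  then show "eventually (\<lambda>n. 1 \<le> f n / ln (real n)) sequentially"
    and "eventually (\<lambda>n. f n / ln (real n) \<le> 1 + c / ln (real n)) sequentially"
    using assms by (eventually_elim, simp add: field_simps)+
  show "(\<lambda>n. 1 + c / ln (real n)) \<longlonglongrightarrow> 1" by real_asymp
qed simp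

theorem mainTheorem3:
  shows "(\<lambda>n. (1 / a n) / ln (real n)) \<longlonglongrightarrow> 1"
  by (rule tendsto_div_ln_one_if_ln_bounded[of _ 2])
     (simp add: ln_le_inverse_a inverse_a_le_ln)

end
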